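(* Let $\mathcal M=\langle M,<,+,\dots\rangle$ be a linear o-minimal expansion of an ordered group. Let $a<b$, $c<d$ in $M$ and let $h:[a,b]\times[c,d]\to M$ be an $\mathcal L$-definable continuous function such that for every $t\in(a,b)$, the map $h(t,-):[c,d]\to M$ is strictly increasing. Then $h(b,d)-h(b,c)>0$.
   Context: $\mathcal L$-definable means definable in $\mathcal M$ with parameters. A function $f:B\subseteq M^n\to M$ is affine if $f(x+t)-f(x)=f(y+t)-f(y)$ whenever $x,y,x+t,y+t\in B$; $\mathcal M$ is linear if every definable $f:B\subseteq M^n\to M$ is affine on each piece of some finite partition of $B$ into definable sets. *)

theory Defs
  imports "HOL-Analysis.Analysis"
begin

text \<open>A first-order structure on the carrier 'a is represented, following van den Dries,
by the family S of its definable (with parameters) sets: S n is a collection of subsets of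
M^n, where M^n is represented as the lists of length n.\<close>

definition tuples :: "nat \<Rightarrow> 'a list set" where
  "tuples n = {xs. length xs = n}"

definition o_minimal_expansion_of_ordered_group ::
  "(nat \<Rightarrow> ('a::{linordered_ab_group_add, linorder_topology}) list set set) \<Rightarrow> bool" where
  "o_minimal_expansion_of_ordered_group S \<longleftrightarrow>
     \<comment> \<open>each S n is a Boolean algebra of subsets of M^n\<close>
     (\<forall>n. \<forall>A\<in>S n. A \<subseteq> tuples n) \<and>
     (\<forall>n. tuples n \<in> S n) \<and>
     (\<forall>n. \<forall>A\<in>S n. tuples n - A \<in> S n) \<and>
     (\<forall>n. \<forall>A\<in>S n. \<forall>B\<in>S n. A \<union> B \<in> S n) \<and>
     \<comment> \<open>cylinders\<close>
     (\<forall>n. \<forall>A\<in>S n. {x # xs | x xs. xs \<in> A} \<in> S (Suc n)) \<and>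
     (\<forall>n. \<forall>A\<in>S n. {xs @ [x] | x xs. xs \<in> A} \<in> S (Suc n)) \<and>
     \<comment> \<open>diagonals\<close>
     (\<forall>n i j. i < n \<longrightarrow> j < n \<longrightarrow> {xs \<in> tuples n. xs ! i = xs ! j} \<in> S n) \<and>
     \<comment> \<open>projections (onto the first n coordinates)\<close>
     (\<forall>n. \<forall>A\<in>S (Suc n). butlast ` A \<in> S n) \<and>
     \<comment> \<open>parameters: every point is definable\<close>
     (\<forall>x. {[x]} \<in> S 1) \<and>
     \<comment> \<open>the language contains < and +\<close>
     {[x, y] | x y. x < y} \<in> S 2 \<and>
     {[x, y, x + y] | x y. True} \<in> S 3 \<and>
     \<comment> \<open>the underlying order is dense\<close>
     (\<forall>x y::'a. x < y \<longrightarrow> (\<exists>z. x < z \<and> z < y)) \<and>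
     \<comment> \<open>o-minimality: definable subsets of M are finite unions of points and open intervals\<close>
     (\<forall>A\<in>S 1. \<exists>F. finite F \<and> {x. [x] \<in> A} = \<Union>F \<and>
        (\<forall>I\<in>F. (\<exists>p. I = {p}) \<or> (\<exists>p q. I = {p<..<q}) \<or> (\<exists>p. I = {p<..}) \<or>
                 (\<exists>q. I = {..<q}) \<or> I = UNIV))"

definition vadd :: "'a::plus list \<Rightarrow> 'a list \<Rightarrow> 'a list" where
  "vadd xs ys = map2 (+) xs ys"

definition affine_on :: "'a::ab_group_add list set \<Rightarrow> ('a list \<Rightarrow> 'a) \<Rightarrow> bool" where
  "affine_on B f \<longleftrightarrow>
     (\<forall>x y t. x \<in> B \<longrightarrow> y \<in> B \<longrightarrow> length t = length x \<longrightarrow>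
        vadd x t \<in> B \<longrightarrow> vadd y t \<in> B \<longrightarrow>
        f (vadd x t) - f x = f (vadd y t) - f y)"

definition definable_fun ::
  "(nat \<Rightarrow> 'a list set set) \<Rightarrow> nat \<Rightarrow> 'a list set \<Rightarrow> ('a list \<Rightarrow> 'a) \<Rightarrow> bool" where
  "definable_fun S n B f \<longleftrightarrow> B \<in> S n \<and> {xs @ [f xs] | xs. xs \<in> B} \<in> S (Suc n)"

definition linear_structure :: "(nat \<Rightarrow> 'a::ab_group_add list set set) \<Rightarrow> bool" where
  "linear_structure S \<longleftrightarrow>
     (\<forall>n B f. definable_fun S n B f \<longrightarrow>
        (\<exists>P. finite P \<and> P \<subseteq> S n \<and> \<Union>P = B \<and> disjoint P \<and> (\<forall>C\<in>P. affine_on C f)))"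

end

theory Submission
  imports Defs
begin

text \<open>By linearity the rectangle is a finite union of definable pieces on each of which \<open>h\<close> is
  affine. By o-minimality, for every \<open>y \<in> [c, d]\<close> some piece contains \<open>(e, b) \<times> {y}\<close> for
  some \<open>e < b\<close>; as \<open>[c, d]\<close> is infinite, two heights \<open>y\<^sub>1 < y\<^sub>2\<close> share a piece.
  Affinity then makes \<open>h t y\<^sub>2 - h t y\<^sub>1\<close> a constant \<open>\<delta>\<close> for \<open>t\<close> near \<open>b\<close>, and \<open>\<delta> > 0\<close>
  by strict monotonicity. Continuity carries \<open>h b y\<^sub>2 - h b y\<^sub>1 \<ge> \<delta>\<close> to the endpoint, where
  \<open>h b\<close> is still weakly increasing.\<close>

definition order_convex :: "'a::linorder set \<Rightarrow> bool" where
  "order_convex I \<longleftrightarrow> (\<forall>x y z. x \<in> I \<longrightarrow> z \<in> I \<longrightarrow> x \<le> y \<longrightarrow> y \<le> z \<longrightarrow> y \<in> I)"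

lemma order_convex_basic_interval:
  fixes I :: "'a::linorder set"
  assumes "(\<exists>p. I = {p}) \<or> (\<exists>p q. I = {p<..<q}) \<or> (\<exists>p. I = {p<..}) \<or> (\<exists>q. I = {..<q}) \<or> I = UNIV"
  shows "order_convex I"
  using assms unfolding order_convex_def
  by (elim disjE exE; simp; meson order_le_less_trans order_less_le_trans)

lemma order_convex_contains_or_avoids_left_segment:
  fixes I :: "'a::linorder set"
  assumes "order_convex I" and "a < b"
  shows "(\<exists>e<b. {e<..<b} \<subseteq> I) \<or> (\<exists>e<b. I \<inter> {e<..<b} = {})"
proof (rule disjCI)
  assume "\<not> (\<exists>e<b. I \<inter> {e<..<b} = {})"
  then have meets: "\<exists>r\<in>I. q < r \<and> r < b" if "q < b" for q
    using that by (meson disjoint_iff greaterThanLessThan_iff)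
  obtain p where p: "p \<in> I" "a < p" "p < b"
    using meets[OF \<open>a < b\<close>] by auto
  have "{p<..<b} \<subseteq> I"
  proof
    fix q assume q: "q \<in> {p<..<b}"
    then obtain r where "r \<in> I" "q < r" by (meson greaterThanLessThan_iff meets)
    with q p \<open>order_convex I\<close> show "q \<in> I"
      unfolding order_convex_def by (meson greaterThanLessThan_iff less_imp_le)
  qed
  with p show "\<exists>e<b. {e<..<b} \<subseteq> I" by blast
qed

text \<open>If every member of a finite cover of \<open>(a, b)\<close> stayed away from some left
  neighbourhood of \<open>b\<close>, a point to the right of all these neighbourhoods would be uncovered.\<close>
lemma finite_order_convex_cover_left_segment:
  fixes G :: "'a::linorder set set"
  assumes dense: "\<And>x y::'a. x < y \<Longrightarrow> \<exists>z. x < z \<and> z < y"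
    and "finite G" and "\<forall>I\<in>G. order_convex I" and "a < b" and "{a<..<b} \<subseteq> \<Union>G"
  shows "\<exists>I\<in>G. \<exists>e<b. {e<..<b} \<subseteq> I"
proof (rule ccontr)
  assume "\<not> ?thesis"
  with assms(3,4) have "\<forall>I\<in>G. \<exists>e. e < b \<and> I \<inter> {e<..<b} = {}"
    using order_convex_contains_or_avoids_left_segment by blast
  then obtain E where E: "\<And>I. I \<in> G \<Longrightarrow> E I < b \<and> I \<inter> {E I<..<b} = {}"
    by metis
  define M where "M = Max (insert a (E ` G))"
  have fin: "finite (insert a (E ` G))"
    using \<open>finite G\<close> by simp
  have "M < b"
    unfolding M_def using fin E \<open>a < b\<close> by (subst Max_less_iff) auto
  then obtain z where z: "M < z" "z < b"
    using dense by blast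
  have "a \<le> M"
    unfolding M_def using fin by simp
  with z have "z \<in> {a<..<b}"
    by simp
  with assms(5) obtain I where "I \<in> G" "z \<in> I"
    by blast
  moreover have "E I \<le> M"
    unfolding M_def using fin \<open>I \<in> G\<close> by simp
  ultimately show False
    using E z by fastforce
qed

lemma infinite_Icc_dense:
  fixes c d :: "'a::linorder"
  assumes dense: "\<And>x y::'a. x < y \<Longrightarrow> \<exists>z. x < z \<and> z < y" and "c < d"
  shows "infinite {c..d}"
proof
  assume "finite {c..d}"
  then have fin: "finite {c<..d}"
    by (rule finite_subset[rotated]) auto
  have "{c<..d} \<noteq> {}"
    using \<open>c < d\<close> by auto
  then have m: "Min {c<..d} \<in> {c<..d}"
    by (rule Min_in[OF fin])
  then obtain z where z: "c < z" "z < Min {c<..d}"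
    using dense by auto
  with m have "z \<in> {c<..d}"
    by auto
  with fin have "Min {c<..d} \<le> z"
    by simp
  with z show False
    by simp
qed

lemma infinite_pigeonhole_ordered_pair:
  fixes Y :: "'a::linorder set"
  assumes "finite P" and "infinite Y" and "\<forall>y\<in>Y. \<exists>C\<in>P. Q C y"
  shows "\<exists>y1\<in>Y. \<exists>y2\<in>Y. y1 < y2 \<and> (\<exists>C\<in>P. Q C y1 \<and> Q C y2)"
proof -
  obtain F where F: "\<And>y. y \<in> Y \<Longrightarrow> F y \<in> P \<and> Q (F y) y"
    using assms(3) by metis
  have "finite (F ` Y)"
    using F \<open>finite P\<close> by (meson finite_subset image_subsetI)
  with \<open>infinite Y\<close> have "\<not> inj_on F Y"
    using finite_imageD by blast
  then obtain y y' where "y \<in> Y" "y' \<in> Y" "y \<noteq> y'" "F y = F y'"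
    unfolding inj_on_def by blast
  with F show ?thesis
    by (metis linorder_neqE)
qed

lemma affine_on_vertical_increment:
  fixes f :: "'a::ab_group_add list \<Rightarrow> 'a"
  assumes "affine_on C f" and "[s, y1] \<in> C" "[s, y2] \<in> C" "[t, y1] \<in> C" "[t, y2] \<in> C"
  shows "f [s, y2] - f [s, y1] = f [t, y2] - f [t, y1]"
proof -
  have "vadd [x, y1] [0, y2 - y1] = [x, y2]" for x
    by (simp add: vadd_def)
  then show ?thesis
    using assms unfolding affine_on_def
    by (metis (no_types, lifting) length_Cons list.size(3))
qed

text \<open>The type class does not include \<open>topological_monoid_add\<close>, so continuity of translation
  is read off the order topology directly.\<close>
lemma tendsto_add_const_ordered:
  fixes f :: "'b \<Rightarrow> 'a::{linordered_ab_group_add, linorder_topology}"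
  assumes "(f \<longlongrightarrow> x) F"
  shows "((\<lambda>t. f t + \<delta>) \<longlongrightarrow> x + \<delta>) F"
proof (rule order_tendstoI)
  fix l assume "l < x + \<delta>"
  then have "l - \<delta> < x"
    by (simp add: diff_less_eq)
  from order_tendstoD(1)[OF assms this] show "\<forall>\<^sub>F t in F. l < f t + \<delta>"
    by (rule eventually_mono) (simp add: diff_less_eq)
next
  fix u assume "x + \<delta> < u"
  then have "x < u - \<delta>"
    by (simp add: less_diff_eq)
  from order_tendstoD(2)[OF assms this] show "\<forall>\<^sub>F t in F. f t + \<delta> < u"
    by (rule eventually_mono) (simp add: less_diff_eq)
qed

lemma islimpt_greaterThanLessThan_upper:
  fixes e b :: "'a::linorder_topology"
  assumes dense: "\<And>x y::'a. x < y \<Longrightarrow> \<exists>z. x < z \<and> z < y" and "e < b"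
  shows "b islimpt {e<..<b}"
proof (rule islimptI)
  fix T assume "open T" "b \<in> T"
  then obtain l where "l < b" "{l<..b} \<subseteq> T"
    using open_left \<open>e < b\<close> by metis
  moreover obtain z where "max e l < z" "z < b"
    using dense \<open>e < b\<close> \<open>l < b\<close> by (meson max_less_iff_conj)
  ultimately have "z \<in> {e<..<b}" "z \<in> T"
    by auto
  then show "\<exists>y\<in>{e<..<b}. y \<in> T \<and> y \<noteq> b"
    by auto
qed

lemma continuous_on_le_at_right_endpoint:
  fixes f g :: "'a::{linordered_ab_group_add, linorder_topology} \<Rightarrow> 'a"
  assumes dense: "\<And>x y::'a. x < y \<Longrightarrow> \<exists>z. x < z \<and> z < y"
    and "continuous_on {a..b} f" "continuous_on {a..b} g" and "a \<le> e" "e < b"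
    and le: "\<forall>t\<in>{e<..<b}. f t + \<delta> \<le> g t"
  shows "f b + \<delta> \<le> g b"
proof (rule tendsto_le)
  let ?F = "at b within {e<..<b}"
  have sub: "{e<..<b} \<subseteq> {a..b}" and b: "b \<in> {a..b}"
    using \<open>a \<le> e\<close> \<open>e < b\<close> by auto
  show "?F \<noteq> bot"
    using islimpt_greaterThanLessThan_upper[OF dense \<open>e < b\<close>] trivial_limit_within by blast
  show "(g \<longlongrightarrow> g b) ?F"
    using assms(3) b sub by (metis continuous_on_def tendsto_within_subset)
  have "(f \<longlongrightarrow> f b) ?F"
    using assms(2) b sub by (metis continuous_on_def tendsto_within_subset)
  then show "((\<lambda>t. f t + \<delta>) \<longlongrightarrow> f b + \<delta>) ?F"
    by (rule tendsto_add_const_ordered)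
  show "\<forall>\<^sub>F t in ?F. f t + \<delta> \<le> g t"
    using le by (auto simp: eventually_at_filter)
qed

lemma continuous_on_rectangle_slice:
  assumes "continuous_on ({a..b} \<times> {c..d}) (\<lambda>(x, y). h x y)" and "y \<in> {c..d}"
  shows "continuous_on {a..b} (\<lambda>t. h t y)"
proof -
  have "continuous_on {a..b} ((\<lambda>(x, y). h x y) \<circ> (\<lambda>t. (t, y)))"
    using assms by (intro continuous_on_compose continuous_intros)
      (auto elim: continuous_on_subset)
  then show ?thesis
    by (simp add: o_def)
qed

lemma endpoint_increment_pos_of_constant_increment:
  fixes h :: "'a::{linordered_ab_group_add, linorder_topology} \<Rightarrow> 'a \<Rightarrow> 'a"
  assumes dense: "\<And>x y::'a. x < y \<Longrightarrow> \<exists>z. x < z \<and> z < y"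
    and cont: "continuous_on ({a..b} \<times> {c..d}) (\<lambda>(x, y). h x y)"
    and mono: "\<forall>t\<in>{a<..<b}. strict_mono_on {c..d} (h t)"
    and "a \<le> e" "e < b" and y: "y1 \<in> {c..d}" "y2 \<in> {c..d}" "y1 < y2"
    and const: "\<And>s t. s \<in> {e<..<b} \<Longrightarrow> t \<in> {e<..<b} \<Longrightarrow>
      h s y2 - h s y1 = h t y2 - h t y1"
  shows "h b d - h b c > 0"
proof -
  have cd: "c \<in> {c..d}" "d \<in> {c..d}" "c \<le> y1" "y2 \<le> d"
    using y by auto
  have slice: "continuous_on {a..b} (\<lambda>t. h t y)" if "y \<in> {c..d}" for y
    using cont that by (rule continuous_on_rectangle_slice)
  have weak_mono: "h b y + 0 \<le> h b y'" if "y \<in> {c..d}" "y' \<in> {c..d}" "y \<le> y'" for y y'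
  proof (rule continuous_on_le_at_right_endpoint[OF dense slice slice \<open>a \<le> e\<close> \<open>e < b\<close>])
    show "\<forall>t\<in>{e<..<b}. h t y + 0 \<le> h t y'"
    proof
      fix t assume "t \<in> {e<..<b}"
      with mono \<open>a \<le> e\<close> have "strict_mono_on {c..d} (h t)"
        by auto
      then show "h t y + 0 \<le> h t y'"
        using that by (simp add: strict_mono_on_leD)
    qed
  qed (use that in auto)
  obtain t0 where t0: "t0 \<in> {e<..<b}"
    using dense \<open>e < b\<close> by auto
  define \<delta> where "\<delta> = h t0 y2 - h t0 y1"
  have "strict_mono_on {c..d} (h t0)"
    using mono t0 \<open>a \<le> e\<close> by auto
  then have "\<delta> > 0"
    using y unfolding \<delta>_def by (simp add: strict_mono_onD)
  have "h b y1 + \<delta> \<le> h b y2"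
  proof (rule continuous_on_le_at_right_endpoint[OF dense slice slice \<open>a \<le> e\<close> \<open>e < b\<close>])
    show "\<forall>t\<in>{e<..<b}. h t y1 + \<delta> \<le> h t y2"
    proof
      fix t assume "t \<in> {e<..<b}"
      with const t0 have "h t y2 - h t y1 = \<delta>"
        unfolding \<delta>_def by blast
      then show "h t y1 + \<delta> \<le> h t y2"
        by (simp add: algebra_simps)
    qed
  qed (use y in auto)
  moreover have "h b c \<le> h b y1" "h b y2 \<le> h b d"
    using weak_mono cd y by auto
  ultimately have "h b c + \<delta> \<le> h b d"
    by (meson add_le_cancel_right order_trans)
  moreover have "h b c < h b c + \<delta>"
    using \<open>\<delta> > 0\<close> by simp
  ultimately show ?thesis
    by (metis diff_gt_0_iff_gt order_less_le_trans)
qed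

context
  fixes S :: "nat \<Rightarrow> ('a::{linordered_ab_group_add, linorder_topology}) list set set"
  assumes om: "o_minimal_expansion_of_ordered_group S"
begin

lemma o_minimal_dense:
  fixes x y :: 'a
  assumes "x < y"
  shows "\<exists>z. x < z \<and> z < y"
proof -
  have "\<forall>x y::'a. x < y \<longrightarrow> (\<exists>z. x < z \<and> z < y)"
    using om unfolding o_minimal_expansion_of_ordered_group_def by (elim conjE) assumption
  with assms show ?thesis
    by blast
qed

lemma definable_subset_tuples: "A \<in> S n \<Longrightarrow> A \<subseteq> tuples n"
  using om unfolding o_minimal_expansion_of_ordered_group_def by (elim conjE) blast

lemma definable_Diff_tuples: "A \<in> S n \<Longrightarrow> tuples n - A \<in> S n"
  using om unfolding o_minimal_expansion_of_ordered_group_def by (elim conjE) blast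

lemma definable_Un: "A \<in> S n \<Longrightarrow> B \<in> S n \<Longrightarrow> A \<union> B \<in> S n"
  using om unfolding o_minimal_expansion_of_ordered_group_def by (elim conjE) blast

lemma definable_cons_cylinder:
  assumes "A \<in> S n"
  shows "{x # xs | x xs. xs \<in> A} \<in> S (Suc n)"
proof -
  have "\<forall>n. \<forall>A\<in>S n. {x # xs | x xs. xs \<in> A} \<in> S (Suc n)"
    using om unfolding o_minimal_expansion_of_ordered_group_def by (elim conjE) assumption
  with assms show ?thesis
    by blast
qed

lemma definable_butlast_image: "A \<in> S (Suc n) \<Longrightarrow> butlast ` A \<in> S n"
  using om unfolding o_minimal_expansion_of_ordered_group_def by (elim conjE) simp

lemma definable_point: "{[x]} \<in> S 1"
  using om unfolding o_minimal_expansion_of_ordered_group_def by (elim conjE) (rule spec)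

lemma definable_Int:
  assumes "A \<in> S n" "B \<in> S n"
  shows "A \<inter> B \<in> S n"
proof -
  have "A \<subseteq> tuples n" "B \<subseteq> tuples n"
    using assms by (auto dest: definable_subset_tuples)
  then have "A \<inter> B = tuples n - ((tuples n - A) \<union> (tuples n - B))"
    by blast
  also have "\<dots> \<in> S n"
    using assms by (intro definable_Diff_tuples definable_Un)
  finally show ?thesis .
qed

lemma definable_horizontal_fibre:
  assumes "C \<in> S 2"
  shows "{[t] | t. [t, y] \<in> C} \<in> S 1"
proof -
  have line: "{x # xs | x xs. xs \<in> {[y]}} = range (\<lambda>t. [t, y])"
    by auto
  have "range (\<lambda>t. [t, y]) \<in> S (Suc 1)"
    unfolding line[symmetric] by (rule definable_cons_cylinder[OF definable_point])
  with assms have "C \<inter> range (\<lambda>t. [t, y]) \<in> S (Suc 1)"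
    unfolding Suc_1 by (rule definable_Int)
  then have "butlast ` (C \<inter> range (\<lambda>t. [t, y])) \<in> S 1"
    by (rule definable_butlast_image)
  moreover have "C \<inter> range (\<lambda>t. [t, y]) = (\<lambda>t. [t, y]) ` {t. [t, y] \<in> C}"
    by auto
  ultimately show ?thesis
    by (simp add: image_image setcompr_eq_image)
qed

lemma definable_unary_finite_union_order_convex:
  assumes "A \<in> S 1"
  shows "\<exists>F. finite F \<and> {x. [x] \<in> A} = \<Union>F \<and> (\<forall>I\<in>F. order_convex I)"
proof -
  have "\<forall>A\<in>S 1. \<exists>F. finite F \<and> {x. [x] \<in> A} = \<Union>F \<and>
      (\<forall>I\<in>F. (\<exists>p. I = {p}) \<or> (\<exists>p q. I = {p<..<q}) \<or> (\<exists>p. I = {p<..}) \<or>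
        (\<exists>q. I = {..<q}) \<or> I = UNIV)"
    using om unfolding o_minimal_expansion_of_ordered_group_def by (elim conjE) assumption
  from this[rule_format, OF assms] show ?thesis
    by (metis order_convex_basic_interval)
qed

lemma definable_cover_left_segment:
  assumes "finite P" "P \<subseteq> S 2" "a < b" and cover: "\<forall>t\<in>{a<..<b}. [t, y] \<in> \<Union>P"
  shows "\<exists>C\<in>P. \<exists>e<b. \<forall>t\<in>{e<..<b}. [t, y] \<in> C"
proof -
  have "\<forall>C\<in>P. \<exists>F. finite F \<and> {t. [t, y] \<in> C} = \<Union>F \<and> (\<forall>I\<in>F. order_convex I)"
  proof
    fix C assume "C \<in> P"
    with assms(2) have "C \<in> S 2"
      by blast
    from definable_unary_finite_union_order_convex[OF definable_horizontal_fibre[OF this, of y]]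
    show "\<exists>F. finite F \<and> {t. [t, y] \<in> C} = \<Union>F \<and> (\<forall>I\<in>F. order_convex I)"
      by simp
  qed
  then obtain F where F: "\<forall>C\<in>P. finite (F C) \<and> {t. [t, y] \<in> C} = \<Union>(F C) \<and> (\<forall>I\<in>F C. order_convex I)"
    by (rule bchoice[elim_format]) blast
  note F_fin = F[rule_format, THEN conjunct1]
    and F_eq = F[rule_format, THEN conjunct2, THEN conjunct1]
    and F_convex = F[rule_format, THEN conjunct2, THEN conjunct2]
  have cov: "{a<..<b} \<subseteq> \<Union>(\<Union>(F ` P))"
  proof
    fix t assume "t \<in> {a<..<b}"
    then obtain C where "C \<in> P" "[t, y] \<in> C"
      using cover by blast
    then have "t \<in> \<Union>(F C)"
      unfolding F_eq[OF \<open>C \<in> P\<close>, symmetric] by simp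
    with \<open>C \<in> P\<close> show "t \<in> \<Union>(\<Union>(F ` P))"
      by blast
  qed
  have fin: "finite (\<Union>(F ` P))"
    using F_fin \<open>finite P\<close> by simp
  have convex: "\<forall>I\<in>\<Union>(F ` P). order_convex I"
  proof
    fix I assume "I \<in> \<Union>(F ` P)"
    then obtain C where "C \<in> P" "I \<in> F C"
      by blast
    with F_convex show "order_convex I"
      by simp
  qed
  obtain I e where "I \<in> \<Union>(F ` P)" "e < b" "{e<..<b} \<subseteq> I"
    using finite_order_convex_cover_left_segment[OF o_minimal_dense fin convex \<open>a < b\<close> cov] by blast
  then obtain C where "C \<in> P" "I \<in> F C"
    by blast
  with \<open>{e<..<b} \<subseteq> I\<close> have "{e<..<b} \<subseteq> {t. [t, y] \<in> C}"
    unfolding F_eq[OF \<open>C \<in> P\<close>] by blast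
  with \<open>C \<in> P\<close> \<open>e < b\<close> show ?thesis
    by blast
qed

end

theorem mainTheorem2:
  fixes S :: "nat \<Rightarrow> ('a::{linordered_ab_group_add, linorder_topology}) list set set"
    and h :: "'a \<Rightarrow> 'a \<Rightarrow> 'a" and a b c d :: 'a
  assumes "o_minimal_expansion_of_ordered_group S"
    and "linear_structure S"
    and "a < b" and "c < d"
    and "definable_fun S 2 {[x, y] | x y. x \<in> {a..b} \<and> y \<in> {c..d}} (\<lambda>xs. h (xs ! 0) (xs ! 1))"
    and "continuous_on ({a..b} \<times> {c..d}) (\<lambda>(x, y). h x y)"
    and "\<forall>t \<in> {a<..<b}. strict_mono_on {c..d} (h t)"
  shows "h b d - h b c > 0"
proof -
  note dense = o_minimal_dense[OF assms(1)]
  obtain P where P: "finite P" "P \<subseteq> S 2" "\<Union>P = {[x, y] | x y. x \<in> {a..b} \<and> y \<in> {c..d}}"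
    "\<forall>C\<in>P. affine_on C (\<lambda>xs. h (xs ! 0) (xs ! 1))"
    using assms(2)[unfolded linear_structure_def, rule_format, OF assms(5)]
    by (elim exE conjE) (rule that)
  have "\<forall>y\<in>{c..d}. \<exists>C\<in>P. \<exists>e<b. \<forall>t\<in>{e<..<b}. [t, y] \<in> C"
  proof
    fix y assume "y \<in> {c..d}"
    then have "\<forall>t\<in>{a<..<b}. [t, y] \<in> \<Union>P"
      unfolding P(3) by auto
    then show "\<exists>C\<in>P. \<exists>e<b. \<forall>t\<in>{e<..<b}. [t, y] \<in> C"
      by (rule definable_cover_left_segment[OF assms(1) P(1,2) assms(3)])
  qed
  from infinite_pigeonhole_ordered_pair[OF P(1) infinite_Icc_dense[OF dense assms(4)] this]
  obtain y1 y2 C where y: "y1 \<in> {c..d}" "y2 \<in> {c..d}" "y1 < y2" and "C \<in> P"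
    and "\<exists>e<b. \<forall>t\<in>{e<..<b}. [t, y1] \<in> C" "\<exists>e<b. \<forall>t\<in>{e<..<b}. [t, y2] \<in> C"
    by blast
  then obtain e1 e2 where e: "e1 < b" "e2 < b" "\<forall>t\<in>{e1<..<b}. [t, y1] \<in> C" "\<forall>t\<in>{e2<..<b}. [t, y2] \<in> C"
    by blast
  define e where "e = max a (max e1 e2)"
  have "a \<le> e" "e < b"
    using e assms(3) by (auto simp: e_def)
  have in_C: "[t, y1] \<in> C" "[t, y2] \<in> C" if "t \<in> {e<..<b}" for t
    using that e by (auto simp: e_def)
  have increment_const: "h s y2 - h s y1 = h t y2 - h t y1" if "s \<in> {e<..<b}" "t \<in> {e<..<b}" for s t
    using affine_on_vertical_increment[OF P(4)[rule_format, OF \<open>C \<in> P\<close>] in_C[OF that(1)] in_C[OF that(2)]]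
    by simp
  show ?thesis
    by (rule endpoint_increment_pos_of_constant_increment[OF dense assms(6,7) \<open>a \<le> e\<close> \<open>e < b\<close> y
          increment_const])
qed

end
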